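(* Let $\lambda_1-\lambda_2=2$ with $\lambda_2\ge1$, and $n=\lambda_1+\lambda_2$. If $(\mu_1,\mu_2)$ is a partition of $n$ with two positive parts such that there exist commuting nilpotent $n\times n$ matrices $B,A$ with $\mathrm{sh}(B)=(\lambda_1,\lambda_2)$ and $\mathrm{sh}(A)=(\mu_1,\mu_2)$, then $\mu_1=\lambda_1$ or $\mu_1=\lambda_1-1$.
   Context: $\mathbb{F}$ is an algebraically closed field of characteristic $0$ and matrices are over $\mathbb{F}$. For a nilpotent matrix $A$, $\mathrm{sh}(A)$ is the partition of $n$ given by the sizes of the Jordan blocks of its Jordan canonical form. *)

theory Defs
  imports "Jordan_Normal_Form.Jordan_Normal_Form_Uniqueness" "HOL-Computational_Algebra.Polynomial"
          "HOL-Library.Multiset"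
begin

definition nilpotent_mat :: "'a :: semiring_1 mat \<Rightarrow> bool" where
  "nilpotent_mat A \<longleftrightarrow> (\<exists>k. A ^\<^sub>m k = 0\<^sub>m (dim_row A) (dim_col A))"

definition has_shape :: "'a :: semiring_1 mat \<Rightarrow> nat multiset \<Rightarrow> bool" where
  "has_shape A p \<longleftrightarrow> (\<exists>n_as. jordan_nf A n_as \<and> mset (map fst n_as) = p)"

end

theory Submission
  imports Defs
begin

(* Conjugate B to its Jordan form J = J_{s1} (+) J_{s2}, where {s1, s2} = {b+2, b}
   and b = l2.  A matrix commuting with J is block upper-triangular Toeplitz: an entry in block
   (p, q) at local position (i, j) can only be nonzero if i <= j and i + q <= j + p.  Giving the
   row of local index i in a block of size p the degree  p - 1 - i  (plus 1 if p = b), every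
   nonzero entry of a commuting matrix goes from a row to a column of strictly smaller degree or
   lies on the diagonal.  Nilpotency kills the diagonal, so each factor lowers the degree and,
   since all degrees are at most b + 1, the commuting nilpotent matrix satisfies A^(b+2) = 0.
   Hence all Jordan blocks of A have size at most b + 2 = l1, i.e. m1 <= l1, while
   m1 >= m2 and m1 + m2 = 2b + 2 give m1 >= b + 1 = l1 - 1. *)

lemma mult_mat_entry:
  "A \<in> carrier_mat n n \<Longrightarrow> B \<in> carrier_mat n n \<Longrightarrow> i < n \<Longrightarrow> j < n \<Longrightarrow>
   (A * B) $$ (i, j) = (\<Sum>k<n. A $$ (i, k) * B $$ (k, j))"
  by (auto simp: scalar_prod_def lessThan_atLeast0 intro!: sum.cong)

lemma mult_mat_entry_nonzero:
  assumes "A \<in> carrier_mat n n" "B \<in> carrier_mat n n" "i < n" "j < n" "(A * B) $$ (i, j) \<noteq> 0"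
  obtains k where "k < n" "A $$ (i, k) \<noteq> 0" "B $$ (k, j) \<noteq> 0"
proof -
  have "(\<Sum>k<n. A $$ (i, k) * B $$ (k, j)) \<noteq> 0"
    using assms(5) unfolding mult_mat_entry[OF assms(1-4)] .
  then obtain k where "k < n" "A $$ (i, k) * B $$ (k, j) \<noteq> 0" by (meson sum.neutral lessThan_iff)
  then show thesis by (intro that) auto
qed

section \<open>Degree-graded matrices\<close>

definition degree_triangular :: "(nat \<Rightarrow> nat) \<Rightarrow> nat \<Rightarrow> 'a::field mat \<Rightarrow> bool" where
  "degree_triangular deg n M \<longleftrightarrow>
     (\<forall>r c. r < n \<longrightarrow> c < n \<longrightarrow> M $$ (r, c) \<noteq> 0 \<longrightarrow> deg c < deg r \<or> r = c)"

definition lowers_degree :: "(nat \<Rightarrow> nat) \<Rightarrow> nat \<Rightarrow> nat \<Rightarrow> 'a::field mat \<Rightarrow> bool" where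
  "lowers_degree deg n k M \<longleftrightarrow>
     (\<forall>r c. r < n \<longrightarrow> c < n \<longrightarrow> M $$ (r, c) \<noteq> 0 \<longrightarrow> deg c + k \<le> deg r)"

lemma degree_triangular_mult:
  assumes A: "A \<in> carrier_mat n n" and B: "B \<in> carrier_mat n n"
    and tA: "degree_triangular deg n A" and tB: "degree_triangular deg n B"
  shows "degree_triangular deg n (A * B)"
    and "\<And>r. r < n \<Longrightarrow> (A * B) $$ (r, r) = A $$ (r, r) * B $$ (r, r)"
proof -
  show "degree_triangular deg n (A * B)" unfolding degree_triangular_def
  proof (intro allI impI)
    fix r c assume r: "r < n" and c: "c < n" and nz: "(A * B) $$ (r, c) \<noteq> 0"
    obtain k where "k < n" "A $$ (r, k) \<noteq> 0" "B $$ (k, c) \<noteq> 0"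
      using mult_mat_entry_nonzero[OF A B r c nz] .
    with tA tB r c show "deg c < deg r \<or> r = c" unfolding degree_triangular_def by fastforce
  qed
  fix r assume r: "r < n"
  have off_diag: "A $$ (r, k) * B $$ (k, r) = 0" if "k \<in> {..<n} - {r}" for k
    using tA tB r that unfolding degree_triangular_def by fastforce
  have "(A * B) $$ (r, r) = (\<Sum>k<n. A $$ (r, k) * B $$ (k, r))" using mult_mat_entry[OF A B r r] .
  also have "\<dots> = A $$ (r, r) * B $$ (r, r) + (\<Sum>k\<in>{..<n}-{r}. A $$ (r, k) * B $$ (k, r))"
    using r by (subst sum.remove[of _ r]) auto
  finally show "(A * B) $$ (r, r) = A $$ (r, r) * B $$ (r, r)" using off_diag by simp
qed

lemma degree_triangular_pow:
  assumes A: "A \<in> carrier_mat n n" and tA: "degree_triangular deg n A"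
  shows "degree_triangular deg n (A ^\<^sub>m k) \<and> (\<forall>r<n. (A ^\<^sub>m k) $$ (r, r) = A $$ (r, r) ^ k)"
proof (induction k)
  case 0
  then show ?case using A by (auto simp: degree_triangular_def)
next
  case (Suc k)
  have "A ^\<^sub>m k \<in> carrier_mat n n" using A by simp
  then show ?case using degree_triangular_mult[OF _ A _ tA] Suc by auto
qed

lemma lowers_degree_pow:
  assumes A: "A \<in> carrier_mat n n" and lA: "lowers_degree deg n 1 A"
  shows "lowers_degree deg n k (A ^\<^sub>m k)"
proof (induction k)
  case 0
  then show ?case using A by (auto simp: lowers_degree_def)
next
  case (Suc k)
  show ?case unfolding lowers_degree_def
  proof (intro allI impI)
    fix r c assume r: "r < n" and c: "c < n" and nz: "(A ^\<^sub>m Suc k) $$ (r, c) \<noteq> 0"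
    have "A ^\<^sub>m k \<in> carrier_mat n n" using A by simp
    then obtain j where "j < n" "(A ^\<^sub>m k) $$ (r, j) \<noteq> 0" "A $$ (j, c) \<noteq> 0"
      using mult_mat_entry_nonzero[OF _ A r c] nz by auto
    with Suc lA r c show "deg c + Suc k \<le> deg r" unfolding lowers_degree_def by fastforce
  qed
qed

text \<open>A nilpotent degree-triangular matrix has zero diagonal, hence lowers degrees;
  if all degrees are at most D, its (D+1)-st power vanishes.\<close>
lemma degree_triangular_nilpotent_pow:
  fixes A :: "'a::field mat"
  assumes A: "A \<in> carrier_mat n n" and tA: "degree_triangular deg n A"
    and nil: "A ^\<^sub>m K = 0\<^sub>m n n" and bound: "\<And>r. r < n \<Longrightarrow> deg r \<le> D"
  shows "A ^\<^sub>m (Suc D) = 0\<^sub>m n n"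
proof -
  have diag: "A $$ (r, r) = 0" if r: "r < n" for r
  proof -
    have "A $$ (r, r) ^ K = (A ^\<^sub>m K) $$ (r, r)" using degree_triangular_pow[OF A tA] r by auto
    then show ?thesis using nil r by simp
  qed
  have "lowers_degree deg n 1 A"
    using diag tA unfolding degree_triangular_def lowers_degree_def by fastforce
  then have lowers: "lowers_degree deg n (Suc D) (A ^\<^sub>m Suc D)" by (rule lowers_degree_pow[OF A])
  have "(A ^\<^sub>m Suc D) $$ (r, c) = 0" if "r < n" "c < n" for r c
  proof (rule ccontr)
    assume "(A ^\<^sub>m Suc D) $$ (r, c) \<noteq> 0"
    then have "deg c + Suc D \<le> deg r" using lowers that unfolding lowers_degree_def by blast
    then show False using bound[OF that(1)] by simp
  qed
  then show ?thesis using A by (intro eq_matI) auto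
qed

section \<open>Toeplitz structure of the commutant of a nilpotent two-block Jordan matrix\<close>

lemma toeplitz_support:
  fixes f :: "nat \<Rightarrow> nat \<Rightarrow> 'a::zero" and p q i j :: nat
  assumes shift: "\<And>i j. i + 1 < p \<Longrightarrow> j + 1 < q \<Longrightarrow> f (i + 1) (j + 1) = f i j"
    and first_col: "\<And>i. i + 1 < p \<Longrightarrow> f (i + 1) 0 = 0"
    and last_row: "\<And>j. j + 1 < q \<Longrightarrow> f (p - 1) j = 0"
    and ij: "i < p" "j < q" and nz: "f i j \<noteq> 0"
  shows "i \<le> j \<and> i + q \<le> j + p"
proof -
  have diagonal: "f (i + k) (j + k) = f i j" if "i + k < p" "j + k < q" for i j k
    using that
  proof (induction k)
    case (Suc k)
    then show ?case using shift[of "i + k" "j + k"] by simp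
  qed simp
  show ?thesis
  proof (rule ccontr)
    assume "\<not> (i \<le> j \<and> i + q \<le> j + p)"
    then consider "j < i" | "i \<le> j" "j + p < i + q" by linarith
    then show False
    proof cases
      case 1
      have "f ((i - j) + j) (0 + j) = f (i - j) 0" by (rule diagonal) (use 1 ij in auto)
      moreover have "f (i - j) 0 = 0" using first_col[of "i - j - 1"] 1 ij by (simp add: Suc_diff_Suc)
      ultimately show False using nz 1 by simp
    next
      case 2
      have "f (i + (p - 1 - i)) (j + (p - 1 - i)) = f i j" by (rule diagonal) (use 2 ij in auto)
      moreover have "f (p - 1) (j + (p - 1 - i)) = 0" by (rule last_row) (use 2 ij in auto)
      ultimately show False using nz ij by simp
    qed
  qed
qed

abbreviation jordan2 :: "nat \<Rightarrow> nat \<Rightarrow> 'a::field mat" where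
  "jordan2 s1 s2 \<equiv> jordan_matrix [(s1, 0), (s2, 0)]"

lemma jordan2_entry:
  assumes "r < s1 + s2" "c < s1 + s2"
  shows "(jordan2 s1 s2 :: 'a::field mat) $$ (r, c) = (if c = r + 1 \<and> c \<noteq> s1 then 1 else 0)"
  using assms by (auto simp: jordan_matrix_def Let_def)

lemma jordan2_carrier: "(jordan2 s1 s2 :: 'a::field mat) \<in> carrier_mat (s1 + s2) (s1 + s2)"
  using jordan_matrix_carrier[of "[(s1, 0::'a), (s2, 0)]"] by simp

lemma mult_jordan2_entry:
  fixes A :: "'a::field mat"
  assumes A: "A \<in> carrier_mat (s1 + s2) (s1 + s2)" and r: "r < s1 + s2" and c: "c < s1 + s2"
  shows "(A * jordan2 s1 s2) $$ (r, c) = (if c \<noteq> 0 \<and> c \<noteq> s1 then A $$ (r, c - 1) else 0)"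
proof -
  have "(A * jordan2 s1 s2) $$ (r, c) = (\<Sum>k<s1+s2. A $$ (r, k) * jordan2 s1 s2 $$ (k, c))"
    by (rule mult_mat_entry[OF A jordan2_carrier r c])
  also have "\<dots> = (\<Sum>k<s1+s2. if k = c - 1 then (if c \<noteq> 0 \<and> c \<noteq> s1 then A $$ (r, k) else 0) else 0)"
    by (rule sum.cong, simp) (use c in \<open>auto simp: jordan2_entry\<close>)
  also have "\<dots> = (if c \<noteq> 0 \<and> c \<noteq> s1 then A $$ (r, c - 1) else 0)"
    unfolding sum.delta[OF finite_lessThan] using c by auto
  finally show ?thesis .
qed

lemma jordan2_mult_entry:
  fixes A :: "'a::field mat"
  assumes A: "A \<in> carrier_mat (s1 + s2) (s1 + s2)" and r: "r < s1 + s2" and c: "c < s1 + s2"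
  shows "(jordan2 s1 s2 * A) $$ (r, c) = (if r + 1 < s1 + s2 \<and> r + 1 \<noteq> s1 then A $$ (r + 1, c) else 0)"
proof -
  have "(jordan2 s1 s2 * A) $$ (r, c) = (\<Sum>k<s1+s2. jordan2 s1 s2 $$ (r, k) * A $$ (k, c))"
    by (rule mult_mat_entry[OF jordan2_carrier A r c])
  also have "\<dots> = (\<Sum>k<s1+s2. if k = r + 1 then (if r + 1 \<noteq> s1 then A $$ (k, c) else 0) else 0)"
    by (rule sum.cong, simp) (use r in \<open>auto simp: jordan2_entry\<close>)
  also have "\<dots> = (if r + 1 < s1 + s2 \<and> r + 1 \<noteq> s1 then A $$ (r + 1, c) else 0)"
    unfolding sum.delta[OF finite_lessThan] by auto
  finally show ?thesis .
qed

lemma commuting_jordan2_support: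
  fixes A :: "'a::field mat"
  assumes A: "A \<in> carrier_mat (s1 + s2) (s1 + s2)"
    and comm: "A * jordan2 s1 s2 = jordan2 s1 s2 * A"
    and s: "s1 > 0" "s2 > 0"
    and X: "(oX, p) \<in> {(0, s1), (s1, s2)}" and Y: "(oY, q) \<in> {(0, s1), (s1, s2)}"
    and ij: "i < p" "j < q" and nz: "A $$ (oX + i, oY + j) \<noteq> 0"
  shows "i \<le> j \<and> i + q \<le> j + p"
proof -
  have shift_eq: "(if r + 1 < s1 + s2 \<and> r + 1 \<noteq> s1 then A $$ (r + 1, c) else 0)
      = (if c \<noteq> 0 \<and> c \<noteq> s1 then A $$ (r, c - 1) else 0)"
    if "r < s1 + s2" "c < s1 + s2" for r c
    using mult_jordan2_entry[OF A that] jordan2_mult_entry[OF A that] comm by simp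
  show ?thesis
  proof (rule toeplitz_support[where f = "\<lambda>i j. A $$ (oX + i, oY + j)" and p = p and q = q])
    fix i j assume "i + 1 < p" "j + 1 < q"
    then show "A $$ (oX + (i + 1), oY + (j + 1)) = A $$ (oX + i, oY + j)"
      using shift_eq[of "oX + i" "oY + (j + 1)"] X Y s by auto
  next
    fix i assume "i + 1 < p"
    then show "A $$ (oX + (i + 1), oY + 0) = 0"
      using shift_eq[of "oX + i" "oY"] X Y s by auto
  next
    fix j assume "j + 1 < q"
    then show "A $$ (oX + (p - 1), oY + j) = 0"
      using shift_eq[of "oX + (p - 1)" "oY + (j + 1)"] X Y s by auto
  qed (use ij nz in auto)
qed

lemma commuting_jordan2_nilpotent_pow:
  fixes A :: "'a::field mat"
  assumes s: "(s1 = b + 2 \<and> s2 = b) \<or> (s1 = b \<and> s2 = b + 2)" and b: "b \<ge> 1"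
    and A: "A \<in> carrier_mat (s1 + s2) (s1 + s2)"
    and comm: "A * jordan2 s1 s2 = jordan2 s1 s2 * A"
    and nil: "A ^\<^sub>m K = 0\<^sub>m (s1 + s2) (s1 + s2)"
  shows "A ^\<^sub>m (b + 2) = 0\<^sub>m (s1 + s2) (s1 + s2)"
proof -
  define local_deg :: "nat \<Rightarrow> nat \<Rightarrow> nat"
    where "local_deg p i = p - 1 - i + (if p = b then 1 else 0)" for p i
  define deg where "deg r = (if r < s1 then local_deg s1 r else local_deg s2 (r - s1))" for r
  have s_pos: "s1 > 0" "s2 > 0" using s b by auto
  have block_position: "\<exists>oX p i. (oX, p) \<in> {(0, s1), (s1, s2)} \<and> i < p \<and> r = oX + i \<and> deg r = local_deg p i"
    if "r < s1 + s2" for r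
  proof (cases "r < s1")
    case True then show ?thesis by (intro exI[of _ 0] exI[of _ s1] exI[of _ r]) (auto simp: deg_def)
  next
    case False then show ?thesis using that
      by (intro exI[of _ s1] exI[of _ s2] exI[of _ "r - s1"]) (auto simp: deg_def)
  qed
  have "degree_triangular deg (s1 + s2) A" unfolding degree_triangular_def
  proof (intro allI impI)
    fix r c assume r: "r < s1 + s2" and c: "c < s1 + s2" and nz: "A $$ (r, c) \<noteq> 0"
    obtain oX p i where X: "(oX, p) \<in> {(0, s1), (s1, s2)}" "i < p" "r = oX + i" "deg r = local_deg p i"
      using block_position[OF r] by blast
    obtain oY q j where Y: "(oY, q) \<in> {(0, s1), (s1, s2)}" "j < q" "c = oY + j" "deg c = local_deg q j"
      using block_position[OF c] by blast
    have "i \<le> j \<and> i + q \<le> j + p"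
      by (rule commuting_jordan2_support[OF A comm s_pos X(1) Y(1) X(2) Y(2)]) (use nz X Y in simp)
    then show "deg c < deg r \<or> r = c" using X Y s unfolding local_deg_def by auto
  qed
  moreover have "deg r \<le> b + 1" if "r < s1 + s2" for r
    using s that unfolding deg_def local_deg_def by auto
  ultimately have "A ^\<^sub>m Suc (b + 1) = 0\<^sub>m (s1 + s2) (s1 + s2)"
    by (rule degree_triangular_nilpotent_pow[OF A _ nil])
  then show ?thesis by (simp add: numeral_2_eq_2)
qed

lemma mset_two_list:
  assumes "mset (map fst xs) = {#x, y#}"
  shows "\<exists>u v e1 e2. xs = [(u, e1), (v, e2)] \<and> ((u = x \<and> v = y) \<or> (u = y \<and> v = x))"
proof -
  have "length xs = 2" using arg_cong[OF assms, of size] by simp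
  then obtain p1 p2 where xs: "xs = [p1, p2]"
    by (metis (no_types, lifting) One_nat_def Suc_1 length_0_conv length_Suc_conv)
  obtain u e1 v e2 where "p1 = (u, e1)" "p2 = (v, e2)" by fastforce
  with assms xs show ?thesis by (auto simp: add_eq_conv_ex)
qed

lemma jordan_nf2_pow_zero:
  fixes M :: "'a::field mat"
  assumes M: "M \<in> carrier_mat n n" and jnf: "jordan_nf M [(u, e1), (v, e2)]"
    and zero: "M ^\<^sub>m k = 0\<^sub>m n n"
  shows "e1 = 0 \<and> e2 = 0 \<and> u \<le> k \<and> v \<le> k"
proof -
  let ?J = "jordan_matrix [(u, e1), (v, e2)]"
  from jnf obtain P Q where w: "similar_mat_wit ?J M Q P"
    unfolding jordan_nf_def similar_mat_def using similar_mat_wit_sym by blast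
  have n: "n = u + v" and PQ: "P \<in> carrier_mat n n" "Q \<in> carrier_mat n n"
    using similar_mat_witD2[OF M similar_mat_wit_sym[OF w]] by auto
  have "?J ^\<^sub>m k = Q * M ^\<^sub>m k * P" by (rule similar_mat_wit_pow_id[OF w])
  then have J_zero: "(?J ^\<^sub>m k) $$ (r, c) = 0" if "r < u + v" "c < u + v" for r c
    using PQ zero that n by simp
  have uv: "u > 0" "v > 0" using jnf unfolding jordan_nf_def by auto
  note entry = jordan_matrix_pow Let_def jordan_block_pow
  have "e1 ^ k = 0" using J_zero[of 0 0] uv by (simp add: entry)
  moreover have "e2 ^ k = 0" using J_zero[of u u] uv by (simp add: entry)
  moreover have "u \<le> k" using J_zero[of 0 k] uv by (cases "u \<le> k") (auto simp: entry)
  moreover have "v \<le> k" using J_zero[of u "u + k"] uv by (cases "v \<le> k") (auto simp: entry)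
  ultimately show ?thesis by simp
qed

lemma nilpotent_shape2_jordan:
  fixes M :: "'a::field mat"
  assumes M: "M \<in> carrier_mat n n" and nil: "nilpotent_mat M" and sh: "has_shape M {#x, y#}"
  obtains s1 s2 where "(s1 = x \<and> s2 = y) \<or> (s1 = y \<and> s2 = x)" "jordan_nf M [(s1, 0), (s2, 0)]"
proof -
  obtain k where k: "M ^\<^sub>m k = 0\<^sub>m n n" using nil M unfolding nilpotent_mat_def by auto
  obtain na where jnf: "jordan_nf M na" and shape: "mset (map fst na) = {#x, y#}"
    using sh unfolding has_shape_def by auto
  obtain s1 s2 e1 e2 where na: "na = [(s1, e1), (s2, e2)]"
    and s: "(s1 = x \<and> s2 = y) \<or> (s1 = y \<and> s2 = x)"
    using mset_two_list[OF shape] by blast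
  have "e1 = 0" "e2 = 0" using jordan_nf2_pow_zero[OF M jnf[unfolded na] k] by auto
  then show thesis using that[OF s] jnf na by simp
qed

lemma shape2_le_nilpotency:
  fixes M :: "'a::field mat"
  assumes M: "M \<in> carrier_mat n n" and sh: "has_shape M {#x, y#}" and zero: "M ^\<^sub>m k = 0\<^sub>m n n"
  shows "x \<le> k"
proof -
  obtain na where jnf: "jordan_nf M na" and shape: "mset (map fst na) = {#x, y#}"
    using sh unfolding has_shape_def by auto
  obtain u v e1 e2 where na: "na = [(u, e1), (v, e2)]" and uv: "(u = x \<and> v = y) \<or> (u = y \<and> v = x)"
    using mset_two_list[OF shape] by blast
  have "u \<le> k" "v \<le> k" using jordan_nf2_pow_zero[OF M jnf[unfolded na] zero] by auto
  then show ?thesis using uv by auto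
qed

lemma commuting_conjugate:
  assumes w: "similar_mat_wit B J P Q" and A: "A \<in> carrier_mat n n" and B: "B \<in> carrier_mat n n"
    and comm: "A * B = B * A"
  shows "similar_mat_wit A (Q * A * P) P Q" and "Q * A * P * J = J * (Q * A * P)"
proof -
  have c: "P \<in> carrier_mat n n" "Q \<in> carrier_mat n n" and PQ: "P * Q = 1\<^sub>m n" "Q * P = 1\<^sub>m n"
    and J: "J = Q * B * P"
    using similar_mat_witD2[OF B w] similar_mat_witD2[OF _ similar_mat_wit_sym[OF w]] by auto
  note assoc = assoc_mult_mat[of _ n n _ n _ n]
  have "similar_mat_wit (Q * A * P) A Q P"
    by (rule similar_mat_witI[OF PQ(2,1) refl]) (use c A in auto)
  then show "similar_mat_wit A (Q * A * P) P Q" by (rule similar_mat_wit_sym)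
  have "Q * A * P * J = Q * A * (P * Q) * B * P" unfolding J using c A B by (simp add: assoc)
  also have "\<dots> = Q * (A * B) * P" using c A B PQ by (simp add: assoc)
  also have "\<dots> = Q * (B * A) * P" using comm by simp
  also have "\<dots> = Q * B * (P * Q) * A * P" using c A B PQ by (simp add: assoc)
  also have "\<dots> = J * (Q * A * P)" unfolding J using c A B by (simp add: assoc)
  finally show "Q * A * P * J = J * (Q * A * P)" .
qed

lemma commuting_nilpotent_pow:
  fixes A B :: "'a::field mat"
  assumes A: "A \<in> carrier_mat n n" and B: "B \<in> carrier_mat n n"
    and nil: "nilpotent_mat A" and comm: "A * B = B * A"
    and jB: "jordan_nf B [(s1, 0), (s2, 0)]"
    and s: "(s1 = b + 2 \<and> s2 = b) \<or> (s1 = b \<and> s2 = b + 2)" and b: "b \<ge> 1"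
  shows "A ^\<^sub>m (b + 2) = 0\<^sub>m n n"
proof -
  obtain P Q where w: "similar_mat_wit B (jordan2 s1 s2) P Q"
    using jB unfolding jordan_nf_def similar_mat_def by blast
  note J = similar_mat_witD2(5)[OF B w] and P = similar_mat_witD2(6)[OF B w]
    and Q = similar_mat_witD2(7)[OF B w]
  have n: "n = s1 + s2" using carrier_matD(1)[OF J] by simp
  define A' where "A' = Q * A * P"
  have wA: "similar_mat_wit A A' P Q" and comm': "A' * jordan2 s1 s2 = jordan2 s1 s2 * A'"
    unfolding A'_def using commuting_conjugate[OF w A B comm] by auto
  have A': "A' \<in> carrier_mat (s1 + s2) (s1 + s2)" unfolding A'_def n[symmetric] using A P Q by simp
  obtain K where "A ^\<^sub>m K = 0\<^sub>m n n" using nil A unfolding nilpotent_mat_def by auto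
  moreover have "A' ^\<^sub>m K = Q * A ^\<^sub>m K * P"
    by (rule similar_mat_wit_pow_id[OF similar_mat_wit_sym[OF wA]])
  ultimately have "A' ^\<^sub>m K = 0\<^sub>m (s1 + s2) (s1 + s2)" using P Q n by simp
  then have "A' ^\<^sub>m (b + 2) = 0\<^sub>m (s1 + s2) (s1 + s2)"
    by (rule commuting_jordan2_nilpotent_pow[OF s b A' comm'])
  moreover have "A ^\<^sub>m (b + 2) = P * A' ^\<^sub>m (b + 2) * Q" by (rule similar_mat_wit_pow_id[OF wA])
  ultimately show ?thesis using P Q n by simp
qed

theorem lemma3p4:
  fixes A B :: "'a :: {alg_closed_field, field_char_0} mat"
    and l1 l2 m1 m2 n :: nat
  assumes "l1 - l2 = 2" "l1 \<ge> l2" "l2 \<ge> 1" "n = l1 + l2"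
    and "m1 \<ge> m2" "m2 \<ge> 1" "m1 + m2 = n"
    and "A \<in> carrier_mat n n" "B \<in> carrier_mat n n"
    and "nilpotent_mat A" "nilpotent_mat B" "A * B = B * A"
    and "has_shape B {#l1, l2#}" "has_shape A {#m1, m2#}"
  shows "m1 = l1 \<or> m1 = l1 - 1"
proof -
  obtain s1 s2 where s: "(s1 = l1 \<and> s2 = l2) \<or> (s1 = l2 \<and> s2 = l1)"
    and jB: "jordan_nf B [(s1, 0), (s2, 0)]"
    using nilpotent_shape2_jordan[OF assms(9,11,13)] .
  have l1: "l1 = l2 + 2" using assms(1,2) by simp
  have "A ^\<^sub>m (l2 + 2) = 0\<^sub>m n n"
    by (rule commuting_nilpotent_pow[OF assms(8,9,10,12) jB _ assms(3)]) (use s l1 in auto)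
  then have "m1 \<le> l2 + 2" using shape2_le_nilpotency[OF assms(8,14)] by blast
  then show ?thesis using l1 assms(4,5,7) by auto
qed

end
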